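(* Let $n\ge 7$, $\zeta_n=e^{2\pi i/n}$, $K=\mathbb{Q}(\zeta_n)$, and let $J=\{j_1<\dots<j_k\}\subseteq\{0,1,\dots,n-1\}$ with $k\ge 3$ and $j_k\le (n-1)/2$, such that the elements of $J$ do not form an arithmetic progression. Let $G$ be the $k\times n$ matrix over $K$ with $G_{i,l}=\zeta_n^{j_i(l-1)}$, and assume all $k\times k$ submatrices of $G$ have non-zero determinant in $K$. Let $P_{\mathrm{bad}}$ be the set of rational primes dividing $|N_{K/\mathbb{Q}}(\Delta)|$ for some such determinant $\Delta$. Let $p\notin P_{\mathrm{bad}}$ be a prime with $p\nmid n$, $\mathfrak{p}$ a prime ideal of $\mathbb{Z}[\zeta_n]$ above $p$, $\mathbb{F}_q\cong\mathbb{Z}[\zeta_n]/\mathfrak{p}$ ($q=p^f$, $f$ the multiplicative order of $p$ mod $n$), and $\overline{\mathcal{C}}$ the code over $\mathbb{F}_q$ generated by the reduction of $G$ modulo $\mathfrak{p}$. Then $\overline{\mathcal{C}}$ (a cyclic $[n,k]$ MDS code) is of non-RS type.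
   Context: A (generalized) Reed–Solomon code over a field $F$ has a generator matrix $(v_j x_j^{i-1})_{1\le i\le k,1\le j\le n}$ with distinct $x_j\in F$ and $v_j\in F^\times$; a code is of RS type if it is equivalent to such a code (by change of generator matrix, column permutation and non-zero column scaling), and of non-RS type otherwise. $N_{K/\mathbb{Q}}$ is the field norm. *)

theory Defs
  imports Complex_Main "HOL-Computational_Algebra.Polynomial"
    "Jordan_Normal_Form.Determinant" "Jordan_Normal_Form.DL_Submatrix"
begin

definition row_space :: "'a::field mat \<Rightarrow> 'a vec set" where
  "row_space G = {transpose_mat G *\<^sub>v a | a. a \<in> carrier_vec (dim_row G)}"

text \<open>Generator matrix (v_j x_j^(i-1)) of a generalized Reed-Solomon code (0-based indices).\<close>
definition GRS_matrix :: "nat \<Rightarrow> nat \<Rightarrow> (nat \<Rightarrow> 'a::field) \<Rightarrow> (nat \<Rightarrow> 'a) \<Rightarrow> 'a mat" where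
  "GRS_matrix k n x v = mat k n (\<lambda>(i, j). v j * x j ^ i)"

definition is_GRS_code :: "nat \<Rightarrow> nat \<Rightarrow> 'a::field vec set \<Rightarrow> bool" where
  "is_GRS_code k n C \<longleftrightarrow> (\<exists>x v. inj_on x {0..<n} \<and> (\<forall>j<n. v j \<noteq> 0)
      \<and> C = row_space (GRS_matrix k n x v))"

text \<open>Equivalence of codes: column permutation and non-zero column scaling
  (change of generator matrix is built in, since codes are sets of codewords).\<close>
definition code_equiv :: "nat \<Rightarrow> 'a::field vec set \<Rightarrow> 'a vec set \<Rightarrow> bool" where
  "code_equiv n C D \<longleftrightarrow> (\<exists>\<sigma> c. \<sigma> permutes {0..<n} \<and> (\<forall>j<n. c j \<noteq> 0)
      \<and> D = (\<lambda>w. vec n (\<lambda>j. c j * w $ (\<sigma> j))) ` C)"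

definition RS_type :: "nat \<Rightarrow> nat \<Rightarrow> 'a::field vec set \<Rightarrow> bool" where
  "RS_type k n C \<longleftrightarrow> (\<exists>D. is_GRS_code k n D \<and> code_equiv n D C)"

definition zeta :: "nat \<Rightarrow> complex" where
  "zeta n = exp (2 * pi * \<i> / of_nat n)"

definition Zzeta :: "nat \<Rightarrow> complex set" where
  "Zzeta n = {poly (map_poly of_int f) (zeta n) | f :: int poly. True}"

text \<open>The k x n matrix G with G_{i,l} = z^(j_i * l) (0-based), for a root of unity z.\<close>
definition Gmat :: "nat \<Rightarrow> nat list \<Rightarrow> 'a::comm_ring_1 \<Rightarrow> 'a mat" where
  "Gmat n js z = mat (length js) n (\<lambda>(i, l). z ^ (js ! i * l))"

definition minorG :: "nat \<Rightarrow> nat list \<Rightarrow> complex \<Rightarrow> nat set \<Rightarrow> complex" where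
  "minorG n js z S = det (submatrix (Gmat n js z) {0..<length js} S)"

text \<open>Field norm N_{K/Q} of the minor Delta_S \<in> K = Q(zeta_n): product of its images under
  all embeddings K \<rightarrow> C, i.e. zeta_n \<mapsto> zeta_n^a with gcd(a,n)=1.  Since Delta_S is an
  integer polynomial expression in zeta_n, its image is the same minor with zeta_n^a.\<close>
definition norm_minor :: "nat \<Rightarrow> nat list \<Rightarrow> nat set \<Rightarrow> complex" where
  "norm_minor n js S = (\<Prod>a\<in>{a\<in>{1..n}. coprime a n}. minorG n js (zeta n ^ a) S)"

definition P_bad :: "nat \<Rightarrow> nat list \<Rightarrow> nat set" where
  "P_bad n js = {p. prime p \<and> (\<exists>S m. S \<subseteq> {0..<n} \<and> card S = length js \<and>
       norm_minor n js S = of_int m \<and> int p dvd \<bar>m\<bar>)}"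

definition is_arith_prog :: "nat list \<Rightarrow> bool" where
  "is_arith_prog js \<longleftrightarrow> (\<exists>a d. \<forall>i<length js. js ! i = a + i * d)"

end

theory Submission
  imports Defs
begin

text \<open>Suppose the reduced code were of RS type, and put \<open>w = h \<zeta>\<^sub>n\<close>. Then every row
  \<open>(w\<^bsup>j\<^sub>i l\<^esup>)\<^sub>l\<close> of its generator matrix is a column-scaled evaluation \<open>b\<^sub>l F\<^sub>i(y\<^sub>l)\<close>
  of a polynomial of degree \<open>< k\<close>. Hence the products of two rows are scaled evaluations of
  polynomials of degree \<open>< 2k - 1\<close>, and any \<open>2k\<close> of them are linearly dependent. On the
  other hand, since \<open>J\<close> is not an arithmetic progression there are \<open>2k\<close> pairs with distinct
  sums \<open>j\<^sub>a + j\<^sub>b < n\<close>, and since \<open>p \<nmid> n\<close> the element \<open>w\<close> is a primitive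
  \<open>n\<close>-th root of unity, so the corresponding \<open>2k\<close> products are rows of an invertible
  Vandermonde matrix.\<close>

section \<open>Vandermonde matrices and low-degree evaluations\<close>

lemma poly_eq_sum_lessThan:
  fixes p :: "'a::comm_semiring_1 poly"
  assumes "degree p < N"
  shows "poly p x = (\<Sum>l<N. coeff p l * x ^ l)"
proof -
  have "poly p x = (\<Sum>l\<le>degree p. coeff p l * x ^ l)"
    by (rule poly_altdef)
  also have "\<dots> = (\<Sum>l<N. coeff p l * x ^ l)"
    using assms by (intro sum.mono_neutral_left) (auto simp: coeff_eq_0)
  finally show ?thesis .
qed

text \<open>Pairing the equations with the coefficients of the Lagrange-type polynomial
  \<open>\<Prod>r\<noteq>s. (X - z r)\<close> isolates the coefficient \<open>c s\<close>.\<close>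

lemma vandermonde_combination_eq_0:
  fixes z c :: "nat \<Rightarrow> 'a::field"
  assumes inj: "inj_on z {..<m}"
    and eqs: "\<forall>l<m. (\<Sum>r<m. c r * z r ^ l) = 0"
    and "s < m"
  shows "c s = 0"
proof -
  define L where "L = (\<Prod>r\<in>{..<m}-{s}. [:- z r, 1:])"
  have "degree L \<le> (\<Sum>r\<in>{..<m}-{s}. degree [:- z r, 1:])"
    unfolding L_def using degree_prod_sum_le[of "{..<m}-{s}" "\<lambda>r. [:- z r, 1:]"]
    by (simp add: o_def)
  also have "\<dots> = m - 1"
    using \<open>s < m\<close> by simp
  finally have deg: "degree L < m"
    using \<open>s < m\<close> by linarith
  have roots: "poly L (z r) = 0" if "r \<in> {..<m}-{s}" for r
    unfolding L_def poly_prod using that by (intro prod_zero) auto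
  have nonroot: "poly L (z s) \<noteq> 0"
    unfolding L_def poly_prod using inj \<open>s < m\<close> by (auto simp: inj_on_def)
  have "0 = (\<Sum>l<m. coeff L l * (\<Sum>r<m. c r * z r ^ l))"
    using eqs by simp
  also have "\<dots> = (\<Sum>l<m. \<Sum>r<m. c r * (coeff L l * z r ^ l))"
    by (simp add: sum_distrib_left mult.left_commute)
  also have "\<dots> = (\<Sum>r<m. \<Sum>l<m. c r * (coeff L l * z r ^ l))"
    by (rule sum.swap)
  also have "\<dots> = (\<Sum>r<m. c r * poly L (z r))"
    by (simp add: poly_eq_sum_lessThan[OF deg] sum_distrib_left)
  also have "\<dots> = c s * poly L (z s)"
    using \<open>s < m\<close> roots by (subst sum.remove[of _ s]) auto
  finally show ?thesis
    using nonroot by simp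
qed

lemma polys_linearly_dependent:
  fixes P :: "nat \<Rightarrow> 'a::field poly"
  assumes deg: "\<forall>r<m. degree (P r) < d" and "d < m"
  obtains c where "\<exists>r<m. c r \<noteq> 0" and "(\<Sum>r<m. smult (c r) (P r)) = 0"
proof -
  define Q where "Q = mat m m (\<lambda>(t, r). coeff (P r) t)"
  have high_coeffs: "coeff (P r) t = 0" if "r < m" "d \<le> t" for r t
    using deg that by (intro coeff_eq_0) fastforce
  have "Q = mat\<^sub>r m m (\<lambda>t. if t = m - 1 then 0\<^sub>v m else vec m (\<lambda>r. coeff (P r) t))"
    unfolding Q_def by (rule eq_matI) (use \<open>d < m\<close> in \<open>auto simp: high_coeffs\<close>)
  then have "det Q = 0"
    using \<open>d < m\<close> by (simp add: det_row_0)
  then obtain v where v: "v \<in> carrier_vec m" "v \<noteq> 0\<^sub>v m" "Q *\<^sub>v v = 0\<^sub>v m"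
    using det_0_iff_vec_prod_zero_field[of Q m] by (auto simp: Q_def)
  show ?thesis
  proof
    show "\<exists>r<m. v $ r \<noteq> 0"
      using v(1,2) by (auto intro: eq_vecI)
    have "(\<Sum>r<m. v $ r * coeff (P r) t) = 0" for t
    proof (cases "t < m")
      case True
      then have "(Q *\<^sub>v v) $ t = 0"
        using v(3) by simp
      then show ?thesis
        using True v(1)
        by (simp add: Q_def scalar_prod_def atLeast0LessThan mult.commute)
    next
      case False
      then show ?thesis
        using \<open>d < m\<close> by (simp add: high_coeffs)
    qed
    then show "(\<Sum>r<m. smult (v $ r) (P r)) = 0"
      by (intro poly_eqI) (simp add: coeff_sum)
  qed
qed

text \<open>The Vandermonde matrix \<open>(z r ^ l)\<close> has rank \<open>m\<close>, whereas \<open>(b l * poly (P r) (y l))\<close>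
  has rank at most \<open>d\<close>.\<close>

lemma vandermonde_not_low_degree_evaluation:
  fixes z b y :: "nat \<Rightarrow> 'a::field"
  assumes "inj_on z {..<m}" and "\<forall>r<m. degree (P r) < d" and "d < m"
    and evals: "\<forall>r<m. \<forall>l<m. z r ^ l = b l * poly (P r) (y l)"
  shows False
proof -
  obtain c where c: "\<exists>r<m. c r \<noteq> 0" "(\<Sum>r<m. smult (c r) (P r)) = 0"
    using polys_linearly_dependent assms(2,3) by blast
  have "(\<Sum>r<m. c r * z r ^ l) = 0" if "l < m" for l
  proof -
    have "(\<Sum>r<m. c r * z r ^ l) = b l * poly (\<Sum>r<m. smult (c r) (P r)) (y l)"
      using evals that by (simp add: poly_sum sum_distrib_left mult_ac)
    then show ?thesis
      using c(2) by simp
  qed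
  then show False
    using c(1) vandermonde_combination_eq_0[OF assms(1)] by blast
qed

section \<open>Pair sums of a set that is not an arithmetic progression\<close>

lemma sorted_wrt_less_nth_mono:
  fixes js :: "'a::linorder list"
  assumes "sorted_wrt (<) js" "a \<le> b" "b < length js"
  shows "js ! a \<le> js ! b"
  using assms sorted_wrt_nth_less[of "(<)" js a b] by (cases "a = b") auto

lemma sorted_wrt_less_nth_le_last:
  fixes js :: "'a::linorder list"
  assumes "sorted_wrt (<) js" and "i < length js"
  shows "js ! i \<le> last js"
proof -
  have "js \<noteq> []"
    using assms(2) by auto
  then show ?thesis
    using sorted_wrt_less_nth_mono[OF assms(1), of i "length js - 1"] assms(2)
    by (simp add: last_conv_nth)
qed

lemma non_arith_prog_second_difference:
  fixes js :: "nat list"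
  assumes sorted: "sorted_wrt (<) js" and "\<not> is_arith_prog js"
  shows "\<exists>i. i + 2 < length js \<and> js ! i + js ! (i + 2) \<noteq> 2 * js ! (i + 1)"
proof (rule ccontr)
  assume "\<not> ?thesis"
  then have second_diff: "i + 2 < length js \<longrightarrow> js ! i + js ! (i + 2) = 2 * js ! (i + 1)" for i
    by blast
  define a d where "a = js ! 0" and "d = js ! 1 - js ! 0"
  have "js ! i = a + i * d \<and> (i + 1 < length js \<longrightarrow> js ! (i + 1) = a + (i + 1) * d)"
    if "i < length js" for i
    using that
  proof (induction i)
    case 0
    have "1 < length js \<longrightarrow> js ! 0 < js ! 1"
      using sorted by (simp add: sorted_wrt_nth_less)
    then show ?case
      by (auto simp: a_def d_def)
  next
    case (Suc i)
    then have "js ! i = a + i * d" "js ! (i + 1) = a + (i + 1) * d"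
      by simp_all
    with second_diff[of i] show ?case
      by (auto simp: algebra_simps)
  qed
  then have "is_arith_prog js"
    unfolding is_arith_prog_def by blast
  with assms(2) show False ..
qed

text \<open>The chain \<open>j\<^sub>0 + j\<^sub>0 < j\<^sub>0 + j\<^sub>1 < j\<^sub>1 + j\<^sub>1 < j\<^sub>1 + j\<^sub>2 < \<dots>\<close> of \<open>2k - 1\<close> pair sums.\<close>

definition pair_sum_chain :: "nat list \<Rightarrow> nat \<Rightarrow> nat" where
  "pair_sum_chain js r = js ! (r div 2) + js ! ((r + 1) div 2)"

lemma pair_sum_chain_strict_mono:
  fixes js :: "nat list"
  assumes sorted: "sorted_wrt (<) js"
  shows "strict_mono_on {..<2 * length js - 1} (pair_sum_chain js)"
proof (rule strict_mono_onI)
  fix r s assume s: "s \<in> {..<2 * length js - 1}" and "r < s"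
  have le: "r div 2 \<le> s div 2" "(r + 1) div 2 \<le> (s + 1) div 2"
    using \<open>r < s\<close> by (simp_all add: div_le_mono)
  have bounds: "s div 2 < length js" "(s + 1) div 2 < length js"
    using s by simp_all
  have "r div 2 < s div 2 \<or> (r + 1) div 2 < (s + 1) div 2"
    using \<open>r < s\<close> by presburger
  then show "pair_sum_chain js r < pair_sum_chain js s"
  proof
    assume "r div 2 < s div 2"
    then show ?thesis
      unfolding pair_sum_chain_def
      by (intro add_less_le_mono sorted_wrt_nth_less[OF sorted _ bounds(1)]
          sorted_wrt_less_nth_mono[OF sorted le(2) bounds(2)])
  next
    assume "(r + 1) div 2 < (s + 1) div 2"
    then show ?thesis
      unfolding pair_sum_chain_def
      by (intro add_le_less_mono sorted_wrt_nth_less[OF sorted _ bounds(2)]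
          sorted_wrt_less_nth_mono[OF sorted le(1) bounds(1)])
  qed
qed

text \<open>The sum \<open>j\<^sub>i + j\<^bsub>i+2\<^esub>\<close> lies strictly between the chain members
  \<open>j\<^sub>i + j\<^bsub>i+1\<^esub>\<close> and \<open>j\<^bsub>i+1\<^esub> + j\<^bsub>i+2\<^esub>\<close>, so it can only be the one
  in between, \<open>2 j\<^bsub>i+1\<^esub>\<close>.\<close>

lemma pair_sum_notin_chain:
  fixes js :: "nat list"
  assumes sorted: "sorted_wrt (<) js" and i: "i + 2 < length js"
    and gap: "js ! i + js ! (i + 2) \<noteq> 2 * js ! (i + 1)"
  shows "js ! i + js ! (i + 2) \<notin> pair_sum_chain js ` {..<2 * length js - 1}"
proof
  let ?chain = "pair_sum_chain js"
  assume "js ! i + js ! (i + 2) \<in> ?chain ` {..<2 * length js - 1}"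
  then obtain r where r: "r \<in> {..<2 * length js - 1}" "?chain r = js ! i + js ! (i + 2)"
    by auto
  have in_range: "2 * i + 1 \<in> {..<2 * length js - 1}" "2 * i + 3 \<in> {..<2 * length js - 1}"
    using i by simp_all
  have "?chain (2 * i + 1) < ?chain r" "?chain r < ?chain (2 * i + 3)"
    using sorted_wrt_nth_less[OF sorted, of i "i + 1"] sorted_wrt_nth_less[OF sorted, of "i + 1" "i + 2"] i
    by (simp_all add: r(2)) (simp_all add: pair_sum_chain_def)
  then have "2 * i + 1 < r" "r < 2 * i + 3"
    using strict_mono_on_less[OF pair_sum_chain_strict_mono[OF sorted]] in_range r(1) by blast+
  then have "r = 2 * i + 2"
    by linarith
  then show False
    using r(2) gap by (simp add: pair_sum_chain_def)
qed

lemma non_arith_prog_distinct_pair_sums: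
  fixes js :: "nat list"
  assumes sorted: "sorted_wrt (<) js" and "\<not> is_arith_prog js"
  obtains pa pb where "\<forall>r<2 * length js. pa r < length js \<and> pb r < length js"
    and "inj_on (\<lambda>r. js ! pa r + js ! pb r) {..<2 * length js}"
proof -
  let ?k = "length js" and ?chain = "pair_sum_chain js"
  obtain i where i: "i + 2 < ?k" "js ! i + js ! (i + 2) \<noteq> 2 * js ! (i + 1)"
    using non_arith_prog_second_difference[OF assms] by blast
  define pa where "pa r = (if r = 2 * ?k - 1 then i else r div 2)" for r
  define pb where "pb r = (if r = 2 * ?k - 1 then i + 2 else (r + 1) div 2)" for r
  define f where "f r = js ! pa r + js ! pb r" for r
  have f_chain: "f r = ?chain r" if "r \<in> {..<2 * ?k - 1}" for r
    using that by (simp add: f_def pa_def pb_def pair_sum_chain_def)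
  have "inj_on ?chain {..<2 * ?k - 1}"
    by (rule strict_mono_on_imp_inj_on[OF pair_sum_chain_strict_mono[OF sorted]])
  then have "inj_on f {..<2 * ?k - 1}"
    by (simp add: inj_on_def f_chain)
  moreover have "f (2 * ?k - 1) \<notin> f ` {..<2 * ?k - 1}"
  proof -
    have "f (2 * ?k - 1) = js ! i + js ! (i + 2)"
      by (simp add: f_def pa_def pb_def)
    moreover have "f ` {..<2 * ?k - 1} = ?chain ` {..<2 * ?k - 1}"
      by (rule image_cong[OF refl f_chain])
    ultimately show ?thesis
      using pair_sum_notin_chain[OF sorted i] by simp
  qed
  ultimately have "inj_on f (insert (2 * ?k - 1) {..<2 * ?k - 1})"
    by simp
  also have "insert (2 * ?k - 1) {..<2 * ?k - 1} = {..<2 * ?k}"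
    using i(1) by auto
  finally have "inj_on (\<lambda>r. js ! pa r + js ! pb r) {..<2 * ?k}"
    unfolding f_def .
  moreover have "\<forall>r<2 * ?k. pa r < ?k \<and> pb r < ?k"
    using i(1) by (auto simp: pa_def pb_def)
  ultimately show ?thesis
    using that by blast
qed

section \<open>Codes of Reed--Solomon type\<close>

definition scaled_poly_eval_rows :: "nat \<Rightarrow> 'a::field mat \<Rightarrow> bool" where
  "scaled_poly_eval_rows k G \<longleftrightarrow> (\<exists>y b F. \<forall>i<dim_row G. degree (F i) < k \<and>
      (\<forall>l<dim_col G. G $$ (i, l) = b l * poly (F i) (y l)))"

lemma row_mem_row_space:
  assumes "i < dim_row G"
  shows "row G i \<in> row_space G"
proof -
  have "row G i = transpose_mat G *\<^sub>v unit_vec (dim_row G) i"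
    using assms by (intro eq_vecI) (simp_all add: scalar_prod_right_unit)
  then show ?thesis
    unfolding row_space_def by fastforce
qed

lemma row_space_GRS_matrix_poly_eval:
  assumes "u \<in> row_space (GRS_matrix k n x v)" and "0 < k"
  obtains F where "degree F < k" and "\<forall>j<n. u $ j = v j * poly F (x j)"
proof -
  obtain \<alpha> where \<alpha>: "\<alpha> \<in> carrier_vec k" "u = transpose_mat (GRS_matrix k n x v) *\<^sub>v \<alpha>"
    using assms(1) unfolding row_space_def GRS_matrix_def by auto
  define F where "F = (\<Sum>t<k. monom (\<alpha> $ t) t)"
  have "degree F \<le> k - 1"
    unfolding F_def by (intro degree_sum_le) (auto intro: order.trans[OF degree_monom_le])
  then have "degree F < k"
    using \<open>0 < k\<close> by linarith
  moreover have "u $ j = v j * poly F (x j)" if "j < n" for j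
    using \<alpha> that
    by (simp add: GRS_matrix_def F_def scalar_prod_def poly_sum poly_monom sum_distrib_left
        atLeast0LessThan mult_ac)
  ultimately show ?thesis
    using that by blast
qed

lemma RS_type_imp_scaled_poly_eval_rows:
  assumes "RS_type k n (row_space G)" and G: "G \<in> carrier_mat k n" and "0 < k"
  shows "scaled_poly_eval_rows k G"
proof -
  obtain D x v \<sigma> c where D: "D = row_space (GRS_matrix k n x v)" and "\<sigma> permutes {0..<n}"
    and code: "row_space G = (\<lambda>u. vec n (\<lambda>j. c j * u $ \<sigma> j)) ` D"
    using assms(1) unfolding RS_type_def is_GRS_code_def code_equiv_def by blast
  then have \<sigma>_lt: "\<sigma> l < n" if "l < n" for l
    using permutes_in_image that by fastforce
  have "\<exists>F. degree F < k \<and> (\<forall>l<n. G $$ (i, l) = c l * v (\<sigma> l) * poly F (x (\<sigma> l)))"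
    if "i < k" for i
  proof -
    obtain u where u: "u \<in> D" "row G i = vec n (\<lambda>j. c j * u $ \<sigma> j)"
      using row_mem_row_space[of i G] G \<open>i < k\<close> code by auto
    obtain F where F: "degree F < k" "\<forall>j<n. u $ j = v j * poly F (x j)"
      using row_space_GRS_matrix_poly_eval u(1) D \<open>0 < k\<close> by blast
    have "G $$ (i, l) = c l * v (\<sigma> l) * poly F (x (\<sigma> l))" if "l < n" for l
      using arg_cong[OF u(2), of "\<lambda>r. r $ l"] G \<open>i < k\<close> that F(2) \<sigma>_lt[OF that] by auto
    with F(1) show ?thesis
      by blast
  qed
  then obtain F where "\<forall>i<k. degree (F i) < k \<and>
      (\<forall>l<n. G $$ (i, l) = c l * v (\<sigma> l) * poly (F i) (x (\<sigma> l)))"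
    by metis
  then show ?thesis
    unfolding scaled_poly_eval_rows_def using G by fastforce
qed

lemma inj_on_power_pair_sums:
  fixes w :: "'a::field" and js :: "nat list"
  assumes inj_pow: "inj_on (\<lambda>d. w ^ d) {..<n}" and small: "\<forall>i<length js. 2 * js ! i < n"
    and pab: "\<forall>r<m. pa r < length js \<and> pb r < length js"
    and inj_sums: "inj_on (\<lambda>r. js ! pa r + js ! pb r) {..<m}"
  shows "inj_on (\<lambda>r. w ^ (js ! pa r + js ! pb r)) {..<m}" and "m \<le> n"
proof -
  let ?e = "\<lambda>r. js ! pa r + js ! pb r"
  have e_lt: "?e ` {..<m} \<subseteq> {..<n}"
  proof (rule image_subsetI)
    fix r assume "r \<in> {..<m}"
    then have "2 * js ! pa r < n" "2 * js ! pb r < n"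
      using pab small by auto
    then show "?e r \<in> {..<n}"
      by simp
  qed
  show "inj_on (\<lambda>r. w ^ ?e r) {..<m}"
    using comp_inj_on[OF inj_sums inj_on_subset[OF inj_pow e_lt]] by (simp add: o_def)
  show "m \<le> n"
    using card_inj_on_le[OF inj_sums e_lt] by simp
qed

lemma not_scaled_poly_eval_rows_Gmat:
  fixes w :: "'a::field"
  assumes inj_pow: "inj_on (\<lambda>d. w ^ d) {..<n}"
    and "sorted_wrt (<) js" and non_ap: "\<not> is_arith_prog js"
    and small: "\<forall>i<length js. 2 * js ! i < n"
  shows "\<not> scaled_poly_eval_rows (length js) (Gmat n js w)"
proof
  let ?k = "length js"
  assume "scaled_poly_eval_rows ?k (Gmat n js w)"
  then obtain y b F where rows: "\<forall>i<?k. degree (F i) < ?k \<and>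
      (\<forall>l<n. w ^ (js ! i * l) = b l * poly (F i) (y l))"
    by (auto simp: scaled_poly_eval_rows_def Gmat_def)
  obtain pa pb where pab: "\<forall>r<2 * ?k. pa r < ?k \<and> pb r < ?k"
    and inj_sums: "inj_on (\<lambda>r. js ! pa r + js ! pb r) {..<2 * ?k}"
    using non_arith_prog_distinct_pair_sums assms(2,3) by blast
  define e where "e r = js ! pa r + js ! pb r" for r
  define P where "P r = F (pa r) * F (pb r)" for r
  have "inj_on (\<lambda>r. w ^ e r) {..<2 * ?k}" and "2 * ?k \<le> n"
    using inj_on_power_pair_sums[OF inj_pow small pab inj_sums] unfolding e_def by simp_all
  moreover have "\<forall>r<2 * ?k. degree (P r) < 2 * ?k - 1"
  proof (intro allI impI)
    fix r assume "r < 2 * ?k"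
    then have "degree (F (pa r)) < ?k" "degree (F (pb r)) < ?k"
      using rows pab by auto
    moreover have "degree (P r) \<le> degree (F (pa r)) + degree (F (pb r))"
      unfolding P_def by (rule degree_mult_le)
    ultimately show "degree (P r) < 2 * ?k - 1"
      by linarith
  qed
  moreover have "?k > 0"
    using non_ap by (auto simp: is_arith_prog_def)
  moreover have "\<forall>r<2 * ?k. \<forall>l<2 * ?k. (w ^ e r) ^ l = (b l)\<^sup>2 * poly (P r) (y l)"
  proof (intro allI impI)
    fix r l assume "r < 2 * ?k" "l < 2 * ?k"
    have "(w ^ e r) ^ l = w ^ (js ! pa r * l) * w ^ (js ! pb r * l)"
      by (simp add: e_def power_add power_mult power_mult_distrib)
    also have "\<dots> = (b l * poly (F (pa r)) (y l)) * (b l * poly (F (pb r)) (y l))"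
      using rows pab \<open>r < 2 * ?k\<close> \<open>l < 2 * ?k\<close> \<open>2 * ?k \<le> n\<close> by auto
    also have "\<dots> = (b l)\<^sup>2 * poly (P r) (y l)"
      by (simp add: P_def power2_eq_square mult_ac)
    finally show "(w ^ e r) ^ l = (b l)\<^sup>2 * poly (P r) (y l)" .
  qed
  ultimately show False
    using vandermonde_not_low_degree_evaluation
      [of "\<lambda>r. w ^ e r" "2 * ?k" P "2 * ?k - 1" "\<lambda>l. (b l)\<^sup>2" y]
    by simp
qed

section \<open>Reduction of \<open>\<zeta>\<^sub>n\<close> modulo a prime not dividing \<open>n\<close>\<close>

lemma inj_on_power_lessThan:
  fixes w :: "'a::field"
  assumes "w \<noteq> 0" and order: "\<forall>d. 0 < d \<and> d < n \<longrightarrow> w ^ d \<noteq> 1"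
  shows "inj_on (\<lambda>d. w ^ d) {..<n}"
proof -
  have "w ^ a \<noteq> w ^ b" if "a < b" "b < n" for a b
  proof
    assume eq: "w ^ a = w ^ b"
    have "w ^ a * w ^ (b - a) = w ^ b"
      using \<open>a < b\<close> by (simp flip: power_add)
    also have "\<dots> = w ^ a * 1"
      using eq by simp
    finally have "w ^ (b - a) = 1"
      using \<open>w \<noteq> 0\<close> by simp
    with order that show False
      by auto
  qed
  then show ?thesis
    by (intro inj_onI) (metis lessThan_iff linorder_neqE_nat)
qed

lemma of_nat_neq_0_if_prime_not_dvd:
  fixes p :: nat
  assumes "prime p" and "\<not> p dvd n" and "of_nat p = (0::'a::field)"
  shows "of_nat n \<noteq> (0::'a)"
proof
  assume "of_nat n = (0::'a)"
  then have "CHAR('a) dvd p" "CHAR('a) dvd n"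
    using assms(3) by (simp_all add: of_nat_eq_0_iff_char_dvd)
  moreover have "coprime p n"
    using assms(1,2) by (rule prime_imp_coprime)
  ultimately have "CHAR('a) = 1"
    using coprime_common_divisor_nat by blast
  then have "of_nat 1 = (0::'a)"
    by (simp only: of_nat_eq_0_iff_char_dvd dvd_refl)
  then show False
    by simp
qed

lemma zeta_power: "zeta n ^ d = cis (2 * pi * real d / real n)"
proof -
  have "zeta n ^ d = exp (of_nat d * (2 * pi * \<i> / of_nat n))"
    unfolding zeta_def by (rule exp_of_nat_mult[symmetric])
  also have "\<dots> = cis (2 * pi * real d / real n)"
    by (simp add: cis_conv_exp mult_ac)
  finally show ?thesis .
qed

lemma zeta_power_self: "0 < n \<Longrightarrow> zeta n ^ n = 1"
  by (simp add: zeta_power)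

lemma zeta_power_neq_1:
  assumes "0 < d" and "d < n"
  shows "zeta n ^ d \<noteq> 1"
proof
  assume "zeta n ^ d = 1"
  have "cos (2 * pi * real d / real n) = Re (zeta n ^ d)"
    by (simp add: zeta_power)
  then have "cos (2 * pi * real d / real n) = 1"
    using \<open>zeta n ^ d = 1\<close> by simp
  then obtain m :: int where "2 * pi * real d / real n = of_int m * 2 * pi"
    using cos_one_2pi_int by blast
  then have "real d / real n = of_int m"
    using \<open>d < n\<close> by (simp add: field_simps)
  moreover have "0 < real d / real n" "real d / real n < 1"
    using assms by simp_all
  ultimately show False
    by simp
qed

lemma sum_zeta_power_mult_eq_0:
  assumes "0 < d" and "d < n"
  shows "(\<Sum>i<n. zeta n ^ (d * i)) = 0"
proof -
  have "(zeta n ^ d) ^ n = (zeta n ^ n) ^ d"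
    by (simp flip: power_mult add: mult.commute)
  also have "\<dots> = 1"
    using assms by (simp add: zeta_power_self)
  finally show ?thesis
    using zeta_power_neq_1[OF assms] by (simp add: power_mult sum_gp_strict)
qed

lemma zeta_power_in_Zzeta: "zeta n ^ m \<in> Zzeta n"
  unfolding Zzeta_def by (rule CollectI, rule exI[of _ "monom 1 m"]) (simp add: map_poly_monom poly_monom)

lemma of_nat_in_Zzeta: "of_nat m \<in> Zzeta n"
  unfolding Zzeta_def by (rule CollectI, rule exI[of _ "monom (int m) 0"]) (simp add: map_poly_monom poly_monom)

lemma add_in_Zzeta:
  assumes "x \<in> Zzeta n" and "y \<in> Zzeta n"
  shows "x + y \<in> Zzeta n"
proof -
  obtain f g where "x = poly (map_poly of_int f) (zeta n)" "y = poly (map_poly of_int g) (zeta n)"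
    using assms unfolding Zzeta_def by blast
  moreover have "map_poly (of_int :: int \<Rightarrow> complex) (f + g) = map_poly of_int f + map_poly of_int g"
    by (rule poly_eqI) (simp add: coeff_map_poly)
  ultimately have "x + y = poly (map_poly of_int (f + g)) (zeta n)"
    by simp
  then show ?thesis
    unfolding Zzeta_def by blast
qed

lemma sum_in_Zzeta: "\<forall>i\<in>A. f i \<in> Zzeta n \<Longrightarrow> sum f A \<in> Zzeta n"
  by (induction A rule: infinite_finite_induct) (simp_all add: of_nat_in_Zzeta[of 0, simplified] add_in_Zzeta)

locale Zzeta_hom =
  fixes n :: nat and h :: "complex \<Rightarrow> 'a::field"
  assumes hom_add: "\<forall>x\<in>Zzeta n. \<forall>y\<in>Zzeta n. h (x + y) = h x + h y"
    and hom_mult: "\<forall>x\<in>Zzeta n. \<forall>y\<in>Zzeta n. h (x * y) = h x * h y"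
    and hom_one: "h 1 = 1"
begin

lemma hom_zero: "h 0 = 0"
proof -
  have "h (0 + 0) = h 0 + h 0"
    using hom_add of_nat_in_Zzeta[of 0 n] unfolding of_nat_0 by blast
  then show ?thesis
    by (simp only: add.right_neutral add_cancel_right_right)
qed

lemma hom_of_nat: "h (of_nat m) = of_nat m"
proof (induction m)
  case (Suc m)
  have "h (of_nat (Suc m)) = h 1 + h (of_nat m)"
    using hom_add of_nat_in_Zzeta[of 1 n] of_nat_in_Zzeta[of m n] by (simp add: add.commute)
  with Suc show ?case
    by (simp add: hom_one)
qed (simp add: hom_zero)

lemma hom_power: "h (zeta n ^ m) = h (zeta n) ^ m"
proof (induction m)
  case (Suc m)
  then show ?case
    using hom_mult zeta_power_in_Zzeta[of n 1] zeta_power_in_Zzeta[of n m] by simp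
qed (simp add: hom_one)

lemma hom_sum: "\<forall>i\<in>A. f i \<in> Zzeta n \<Longrightarrow> h (sum f A) = (\<Sum>i\<in>A. h (f i))"
  by (induction A rule: infinite_finite_induct) (simp_all add: hom_zero hom_add sum_in_Zzeta)

lemma map_mat_Gmat: "map_mat h (Gmat n js (zeta n)) = Gmat n js (h (zeta n))"
  by (rule eq_matI) (simp_all add: Gmat_def hom_power)

text \<open>If \<open>n\<close> is invertible in the target field, \<open>h \<zeta>\<^sub>n\<close> is again a primitive \<open>n\<close>-th root
  of unity: applying \<open>h\<close> to \<open>\<Sum>i<n. \<zeta>\<^sub>n\<^bsup>d i\<^esup> = 0\<close> shows \<open>h \<zeta>\<^sub>n\<^bsup>d\<^esup> \<noteq> 1\<close> for \<open>0 < d < n\<close>.\<close>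

lemma inj_on_hom_zeta_powers:
  assumes "of_nat n \<noteq> (0::'a)"
  shows "inj_on (\<lambda>d. h (zeta n) ^ d) {..<n}"
proof (rule inj_on_power_lessThan)
  have "0 < n"
    using assms by (cases n) auto
  then have "h (zeta n) ^ n = 1"
    using zeta_power_self[of n] by (simp flip: hom_power add: hom_one)
  then show "h (zeta n) \<noteq> 0"
    using \<open>0 < n\<close> by (cases n) auto
  show "\<forall>d. 0 < d \<and> d < n \<longrightarrow> h (zeta n) ^ d \<noteq> 1"
  proof (intro allI impI notI)
    fix d assume d: "0 < d \<and> d < n" and "h (zeta n) ^ d = 1"
    have "(\<Sum>i<n. h (zeta n ^ (d * i))) = (\<Sum>i<n. (h (zeta n) ^ d) ^ i)"
      by (simp add: hom_power flip: power_mult)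
    also have "\<dots> = of_nat n"
      using \<open>h (zeta n) ^ d = 1\<close> by simp
    finally have "(\<Sum>i<n. h (zeta n ^ (d * i))) = of_nat n" .
    moreover have "(\<Sum>i<n. h (zeta n ^ (d * i))) = h (\<Sum>i<n. zeta n ^ (d * i))"
      using hom_sum[of "{..<n}" "\<lambda>i. zeta n ^ (d * i)"] zeta_power_in_Zzeta by simp
    moreover have "\<dots> = 0"
      using d sum_zeta_power_mult_eq_0 hom_zero by simp
    ultimately show False
      using assms by simp
  qed
qed

end

theorem mainTheorem5:
  fixes n k p :: nat and js :: "nat list" and h :: "complex \<Rightarrow> 'a::{field,finite}"
  assumes "n \<ge> 7"
    and "length js = k" and "k \<ge> 3"
    and "sorted_wrt (<) js"
    and "2 * last js \<le> n - 1"
    and "\<not> is_arith_prog js"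
    and "\<forall>S. S \<subseteq> {0..<n} \<and> card S = k \<longrightarrow> minorG n js (zeta n) S \<noteq> 0"
    and "prime p" and "p \<notin> P_bad n js" and "\<not> p dvd n"
    and hom_add: "\<forall>x\<in>Zzeta n. \<forall>y\<in>Zzeta n. h (x + y) = h x + h y"
    and hom_mult: "\<forall>x\<in>Zzeta n. \<forall>y\<in>Zzeta n. h (x * y) = h x * h y"
    and hom_one: "h 1 = 1"
    and hom_surj: "h ` Zzeta n = UNIV"
    and above_p: "h (of_nat p) = 0"
  shows "\<not> RS_type k n (row_space (map_mat h (Gmat n js (zeta n))))"
proof
  assume RS: "RS_type k n (row_space (map_mat h (Gmat n js (zeta n))))"
  interpret H: Zzeta_hom n h
    using hom_add hom_mult hom_one by unfold_locales
  have "of_nat n \<noteq> (0::'a)"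
    using \<open>prime p\<close> \<open>\<not> p dvd n\<close> above_p H.hom_of_nat[of p]
    by (intro of_nat_neq_0_if_prime_not_dvd) simp_all
  then have inj_pow: "inj_on (\<lambda>d. h (zeta n) ^ d) {..<n}"
    by (rule H.inj_on_hom_zeta_powers)
  have "2 * js ! i < n" if "i < k" for i
    using sorted_wrt_less_nth_le_last[OF \<open>sorted_wrt (<) js\<close>, of i] that \<open>length js = k\<close>
      \<open>2 * last js \<le> n - 1\<close> \<open>n \<ge> 7\<close> by linarith
  moreover have "scaled_poly_eval_rows k (Gmat n js (h (zeta n)))"
  proof (rule RS_type_imp_scaled_poly_eval_rows)
    show "RS_type k n (row_space (Gmat n js (h (zeta n))))"
      using RS by (simp only: H.map_mat_Gmat)
    show "Gmat n js (h (zeta n)) \<in> carrier_mat k n"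
      by (simp add: Gmat_def \<open>length js = k\<close>)
  qed (use \<open>k \<ge> 3\<close> in simp)
  ultimately show False
    using not_scaled_poly_eval_rows_Gmat[OF inj_pow \<open>sorted_wrt (<) js\<close> \<open>\<not> is_arith_prog js\<close>]
      \<open>length js = k\<close> by blast
qed

end
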